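(* Let $G$ be a graph with minimum degree $\delta(G)\ge 2$ and $\mu(G)\le\delta(G)-1$, and let $S,T$ be disjoint vertex sets such that $(S,T)$ realizes $\mu(G)$. Then $|S|\ge\delta(G)-1$, and if $|S|=\delta(G)-1$ then $\mu(G)=\delta(G)-1$.
   Context: All graphs are finite and simple; $\delta(G)$ is the minimum degree. For a graph $G=(V,E)$ on $n$ vertices, a fractional vertex cover is a function $f:V\to[0,\infty)$ with $f(u)+f(v)\ge 1$ for every edge $uv\in E$; $\tau^*(G)$ denotes the minimum of $\sum_{v\in V}f(v)$ over all fractional vertex covers. For $E'\subseteq E$ let $G-E'=(V,E\setminus E')$, and $\mu(G)=\min\{|E'| : E'\subseteq E,\ \tau^*(G-E')<n/2\}$. For disjoint $S,T\subseteq V$, $E_G(S;V\setminus T)$ is the set of edges with both endpoints in $S$ or with one endpoint in $S$ and the other in $V\setminus(S\cup T)$. It holds that $\mu(G)=\min|E_G(S;V\setminus T)|$ over disjoint $S,T$ with $|S|>|T|$; a pair $(S,T)$ of disjoint subsets with $|S|>|T|$ and $|E_G(S;V\setminus T)|=\mu(G)$ is said to realize $\mu(G)$. *)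

theory Defs
  imports Complex_Main
begin

definition simple_graph :: "'a set \<Rightarrow> 'a set set \<Rightarrow> bool" where
  "simple_graph V E \<longleftrightarrow> finite V \<and>
     (\<forall>e\<in>E. \<exists>u v. u \<in> V \<and> v \<in> V \<and> u \<noteq> v \<and> e = {u, v})"

definition degree :: "'a set set \<Rightarrow> 'a \<Rightarrow> nat" where
  "degree E v = card {e\<in>E. v \<in> e}"

definition min_degree :: "'a set \<Rightarrow> 'a set set \<Rightarrow> nat" where
  "min_degree V E = Min (degree E ` V)"

definition frac_vertex_cover :: "'a set \<Rightarrow> 'a set set \<Rightarrow> ('a \<Rightarrow> real) \<Rightarrow> bool" where
  "frac_vertex_cover V E f \<longleftrightarrow> (\<forall>v\<in>V. f v \<ge> 0) \<and>
     (\<forall>u v. {u, v} \<in> E \<longrightarrow> f u + f v \<ge> 1)"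

definition tau_star :: "'a set \<Rightarrow> 'a set set \<Rightarrow> real" where
  "tau_star V E = Inf {(\<Sum>v\<in>V. f v) | f. frac_vertex_cover V E f}"

definition mu :: "'a set \<Rightarrow> 'a set set \<Rightarrow> nat" where
  "mu V E = (LEAST k. \<exists>E'. E' \<subseteq> E \<and> card E' = k \<and>
                   tau_star V (E - E') < real (card V) / 2)"

definition edges_ST :: "'a set \<Rightarrow> 'a set set \<Rightarrow> 'a set \<Rightarrow> 'a set \<Rightarrow> 'a set set" where
  "edges_ST V E S T = {e\<in>E. e \<subseteq> S \<or>
       (\<exists>u w. e = {u, w} \<and> u \<in> S \<and> w \<in> V - (S \<union> T))}"

definition realizes_mu :: "'a set \<Rightarrow> 'a set set \<Rightarrow> 'a set \<Rightarrow> 'a set \<Rightarrow> bool" where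
  "realizes_mu V E S T \<longleftrightarrow> S \<subseteq> V \<and> T \<subseteq> V \<and> S \<inter> T = {} \<and>
     card S > card T \<and> card (edges_ST V E S T) = mu V E"

end

theory Submission
  imports Defs
begin

(* With d the minimum degree, each vertex of S has at least d - |T| incident edges in
   F = E_G(S; V - T), and an edge of F contains two vertices of S only if it lies inside S;
   double counting gives
     |S| (d - |T|) <= |F| + min |F| (|S| choose 2).
   As |T| < |S| and |F| = mu < d, for s = |S| >= 3 this yields s (d - s + 1) <= 2 (d - 1), that is
   (s - 2) (d - 1 - s) <= 0, while the binomial term disposes of s = 1 and s = 2. *)

lemma simple_graph_edgeE:
  assumes "simple_graph V E" "e \<in> E"
  obtains u v where "u \<in> V" "v \<in> V" "u \<noteq> v" "e = {u, v}"
  using assms unfolding simple_graph_def by meson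

lemma simple_graph_card_edge:
  assumes "simple_graph V E" "e \<in> E"
  shows "card e = 2"
  using assms by (elim simple_graph_edgeE) auto

lemma simple_graph_finite_edges:
  assumes "simple_graph V E"
  shows "finite E"
proof (rule finite_subset)
  show "E \<subseteq> Pow V" using assms by (auto elim: simple_graph_edgeE)
  show "finite (Pow V)" using assms by (simp add: simple_graph_def)
qed

lemma finite_edges_ST:
  assumes "simple_graph V E"
  shows "finite (edges_ST V E S T)"
  using simple_graph_finite_edges[OF assms] by (simp add: edges_ST_def)

lemma min_degree_le_degree:
  assumes "finite V" "v \<in> V"
  shows "min_degree V E \<le> degree E v"
  using assms by (simp add: min_degree_def)

lemma degree_le_card_edges_ST_at:
  assumes G: "simple_graph V E" and "v \<in> S" and "finite T"
  shows "degree E v \<le> card {e\<in>edges_ST V E S T. v \<in> e} + card T"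
proof -
  let ?F = "edges_ST V E S T"
  have "{e\<in>E. v \<in> e} \<subseteq> {e\<in>?F. v \<in> e} \<union> (\<lambda>w. {v, w}) ` T"
  proof
    fix e assume "e \<in> {e\<in>E. v \<in> e}"
    then have "e \<in> E" "v \<in> e" by simp_all
    then obtain w where "w \<in> V" "e = {v, w}"
      using G by (elim simple_graph_edgeE) (auto simp: insert_commute)
    then show "e \<in> {e\<in>?F. v \<in> e} \<union> (\<lambda>w. {v, w}) ` T"
      using \<open>e \<in> E\<close> \<open>v \<in> S\<close> by (cases "w \<in> T") (auto simp: edges_ST_def)
  qed
  then have "degree E v \<le> card ({e\<in>?F. v \<in> e} \<union> (\<lambda>w. {v, w}) ` T)"
    unfolding degree_def using finite_edges_ST[OF G] \<open>finite T\<close> by (intro card_mono) auto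
  also have "\<dots> \<le> card {e\<in>?F. v \<in> e} + card ((\<lambda>w. {v, w}) ` T)"
    by (rule card_Un_le)
  also have "\<dots> \<le> card {e\<in>?F. v \<in> e} + card T"
    using card_image_le[OF \<open>finite T\<close>] by simp
  finally show ?thesis .
qed

lemma sum_card_incident_le:
  assumes "finite S" "finite F" "\<forall>e\<in>F. card e = 2"
  shows "(\<Sum>v\<in>S. card {e\<in>F. v \<in> e}) \<le> card F + card {e\<in>F. e \<subseteq> S}"
proof -
  have "(\<Sum>v\<in>S. card {e\<in>F. v \<in> e}) = (\<Sum>e\<in>F. card (S \<inter> e))"
    using assms(1,2) by (intro sum_multicount_gen) (auto simp: Int_def)
  also have "\<dots> \<le> (\<Sum>e\<in>F. 1 + (if e \<subseteq> S then 1 else 0))"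
  proof (rule sum_mono)
    fix e assume "e \<in> F"
    then have e2: "card e = 2" "finite e" using assms(3) by (auto intro: card_ge_0_finite)
    show "card (S \<inter> e) \<le> 1 + (if e \<subseteq> S then 1 else 0)"
    proof (cases "e \<subseteq> S")
      case False
      then have "card (S \<inter> e) < card e" using e2 by (intro psubset_card_mono) auto
      with e2 show ?thesis by simp
    qed (use e2 in \<open>simp add: Int_absorb1\<close>)
  qed
  also have "\<dots> = card F + card {e\<in>F. e \<subseteq> S}"
    using assms(2) by (subst sum.distrib) (simp add: sum.If_cases Int_def conj_commute)
  finally show ?thesis .
qed

lemma card_edges_inside_le_choose:
  assumes "finite S" "\<forall>e\<in>F. card e = 2"
  shows "card {e\<in>F. e \<subseteq> S} \<le> card S choose 2"
proof -
  have "card {e\<in>F. e \<subseteq> S} \<le> card {B. B \<subseteq> S \<and> card B = 2}"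
    using assms by (intro card_mono) (auto simp: finite_Pow_iff intro: finite_subset[of _ "Pow S"])
  with n_subsets[OF assms(1)] show ?thesis by simp
qed

lemma counting_bound_arith:
  fixes s t d m :: nat
  assumes incidences: "s * (d - t) \<le> m + min m (s choose 2)" and "t < s" and "m < d"
  shows "d - 1 \<le> s \<and> (s = d - 1 \<longrightarrow> m = d - 1)"
proof -
  have le_2m: "s * (d - s + 1) \<le> 2 * m" if "s \<le> d"
  proof -
    have "s * (d - s + 1) \<le> s * (d - t)" using that \<open>t < s\<close> by (intro mult_le_mono2) simp
    with incidences show ?thesis by simp
  qed
  consider "s = 1" | "s = 2" | "3 \<le> s" using \<open>t < s\<close> by linarith
  then show ?thesis
  proof cases
    case 1
    then have "d \<le> m" using incidences \<open>t < s\<close> by (simp add: binomial_eq_0)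
    with \<open>m < d\<close> show ?thesis by simp
  next
    case 2
    have "2 * (d - 1) \<le> s * (d - t)" using 2 \<open>t < s\<close> by (intro mult_le_mono) auto
    also have "\<dots> \<le> m + 1" using incidences 2 by simp
    finally show ?thesis using 2 \<open>m < d\<close> by linarith
  next
    case 3
    have "\<not> s + 1 < d"
    proof
      assume "s + 1 < d"
      define k where "k = d - s - 1"
      have d: "d = s + 1 + k" and "1 \<le> k" using \<open>s + 1 < d\<close> by (simp_all add: k_def)
      have "2 * k < s * k" using 3 \<open>1 \<le> k\<close> by simp
      then have "2 * (d - 1) < s * (d - s + 1)" by (simp add: d algebra_simps)
      also have "\<dots> \<le> 2 * m" using le_2m d by simp
      finally show False using \<open>m < d\<close> by simp
    qed
    moreover have "m = d - 1" if "s = d - 1"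
      using le_2m that 3 \<open>m < d\<close> by simp
    ultimately show ?thesis by linarith
  qed
qed

lemma card_mult_min_degree_le_edges_ST:
  assumes G: "simple_graph V E" and "S \<subseteq> V" and "finite T"
  defines "F \<equiv> edges_ST V E S T"
  shows "card S * (min_degree V E - card T) \<le> card F + min (card F) (card S choose 2)"
proof -
  have "finite V" using G by (simp add: simple_graph_def)
  have "finite S" using \<open>S \<subseteq> V\<close> \<open>finite V\<close> by (rule finite_subset)
  have "finite F" unfolding F_def using G by (rule finite_edges_ST)
  have card2: "\<forall>e\<in>F. card e = 2"
    unfolding F_def edges_ST_def using simple_graph_card_edge[OF G] by auto
  have "card S * (min_degree V E - card T) = (\<Sum>v\<in>S. min_degree V E - card T)"
    by simp
  also have "\<dots> \<le> (\<Sum>v\<in>S. card {e\<in>F. v \<in> e})"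
  proof (rule sum_mono)
    fix v assume "v \<in> S"
    have "min_degree V E \<le> degree E v"
      using \<open>finite V\<close> \<open>v \<in> S\<close> \<open>S \<subseteq> V\<close> by (intro min_degree_le_degree) auto
    also have "\<dots> \<le> card {e\<in>F. v \<in> e} + card T"
      unfolding F_def using G \<open>v \<in> S\<close> \<open>finite T\<close> by (rule degree_le_card_edges_ST_at)
    finally show "min_degree V E - card T \<le> card {e\<in>F. v \<in> e}" by simp
  qed
  also have "\<dots> \<le> card F + card {e\<in>F. e \<subseteq> S}"
    using \<open>finite S\<close> \<open>finite F\<close> card2 by (rule sum_card_incident_le)
  also have "card {e\<in>F. e \<subseteq> S} \<le> min (card F) (card S choose 2)"
    using card_edges_inside_le_choose[OF \<open>finite S\<close> card2] \<open>finite F\<close>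
    by (simp add: card_mono)
  finally show ?thesis by simp
qed

theorem lemma24:
  fixes V :: "'a set" and E :: "'a set set" and S T :: "'a set"
  assumes "simple_graph V E"
    and "V \<noteq> {}"
    and "min_degree V E \<ge> 2"
    and "mu V E \<le> min_degree V E - 1"
    and "realizes_mu V E S T"
  shows "card S \<ge> min_degree V E - 1 \<and>
         (card S = min_degree V E - 1 \<longrightarrow> mu V E = min_degree V E - 1)"
proof -
  from \<open>realizes_mu V E S T\<close> have "S \<subseteq> V" "T \<subseteq> V" "card T < card S"
    and mu: "mu V E = card (edges_ST V E S T)"
    by (simp_all add: realizes_mu_def)
  have "finite T"
    using \<open>simple_graph V E\<close> \<open>T \<subseteq> V\<close> by (auto simp: simple_graph_def intro: finite_subset)
  have bound: "card S * (min_degree V E - card T) \<le> mu V E + min (mu V E) (card S choose 2)"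
    using card_mult_min_degree_le_edges_ST[OF \<open>simple_graph V E\<close> \<open>S \<subseteq> V\<close> \<open>finite T\<close>]
    by (simp add: mu)
  have "mu V E < min_degree V E"
    using assms(3,4) by linarith
  with bound \<open>card T < card S\<close> show ?thesis
    by (rule counting_bound_arith)
qed

end
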